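(* Let $m \geq 4$ be an integer, let $p$ be a prime with $\gcd(p, m) = 1$, and let $n_0$ be a positive integer with $n_0 \equiv 1 \pmod{p}$. Then there are no polynomials $x(\lambda), y(\lambda), z(\lambda)$ with positive integer coefficients such that $$\frac{m}{n_0 + p\lambda} = \frac{1}{x(\lambda)} + \frac{1}{y(\lambda)} + \frac{1}{z(\lambda)}$$ holds identically in $\lambda$.
   Context: $\lambda$ is an indeterminate. *)

theory Defs
  imports "HOL-Computational_Algebra.Polynomial" "HOL-Computational_Algebra.Primes"
begin

text \<open>A polynomial with positive integer coefficients: a nonzero integer polynomial
all of whose (nonzero) coefficients are positive, i.e. all coefficients are nonnegative.\<close>
definition pos_int_coeff_poly :: "int poly \<Rightarrow> bool" where
  "pos_int_coeff_poly f \<longleftrightarrow> f \<noteq> 0 \<and> (\<forall>i. coeff f i \<ge> 0)"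

definition evalR :: "int poly \<Rightarrow> real \<Rightarrow> real" where
  "evalR f t = poly (map_poly of_int f) t"

end

theory Submission
  imports Defs
begin

(* Substituting \<lambda> = U - q, where n0 = p q + 1, turns the identity into
   M x y z = (1 + p U) (x y + y z + z x) for polynomials x, y, z in U with positive leading
   coefficients.  Comparing degrees (leading coefficients cannot cancel) shows that one factor,
   and then, because M does not divide p, a second factor is linear.  At U = 0 the identity
   becomes M X Y Z = X Y + Y Z + Z X in integers, which for M \<ge> 4 forces two of X, Y, Z to
   vanish.  Dividing out the resulting common factor U leaves an identity w D = a (1 + p U) L
   with a known quadratic D; comparing its two lowest coefficients (w(0) < 0, while w has a
   positive leading coefficient) with the signs of the leading ones leads to a contradiction.
   Primality of p is used only through p > 0 and M not dividing p. *)

definition unit_fraction_identity ::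
  "'a::comm_ring_1 \<Rightarrow> 'a poly \<Rightarrow> 'a poly \<Rightarrow> 'a poly \<Rightarrow> 'a poly \<Rightarrow> bool" where
  "unit_fraction_identity M N x y z \<longleftrightarrow> smult M (x * y * z) = N * (x * y + y * z + z * x)"

lemma unit_fraction_identity_swap12:
  "unit_fraction_identity M N x y z \<longleftrightarrow> unit_fraction_identity M N y x z"
  unfolding unit_fraction_identity_def by (simp add: ac_simps)

lemma unit_fraction_identity_swap23:
  "unit_fraction_identity M N x y z \<longleftrightarrow> unit_fraction_identity M N x z y"
  unfolding unit_fraction_identity_def by (simp add: ac_simps)

lemma unit_fraction_identity_pcompose:
  "unit_fraction_identity M N x y z \<Longrightarrow>
   unit_fraction_identity M (N \<circ>\<^sub>p r) (x \<circ>\<^sub>p r) (y \<circ>\<^sub>p r) (z \<circ>\<^sub>p r)"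
  unfolding unit_fraction_identity_def by (metis pcompose_add pcompose_mult pcompose_smult)

lemma degree_add_pos_lead_coeff:
  fixes f g :: "'a::linordered_idom poly"
  assumes "lead_coeff f > 0" "lead_coeff g > 0"
  shows "degree (f + g) = max (degree f) (degree g)"
proof (cases "degree f = degree g")
  case True
  have "coeff (f + g) (degree g) = lead_coeff f + lead_coeff g" using True by simp
  then have "degree g \<le> degree (f + g)" using assms by (intro le_degree) simp
  then show ?thesis using True degree_add_le[of f "degree g" g] by simp
next
  case False
  then show ?thesis
    by (cases "degree f < degree g") (simp_all add: degree_add_eq_right degree_add_eq_left)
qed

lemma lead_coeff_add_pos:
  fixes f g :: "'a::linordered_idom poly"
  assumes "lead_coeff f > 0" "lead_coeff g > 0"
  shows "lead_coeff (f + g) > 0"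
proof -
  consider "degree f < degree g" | "degree g < degree f" | "degree f = degree g" by linarith
  then show ?thesis
  proof cases
    case 1
    then show ?thesis using assms(2) by (simp only: lead_coeff_add_le)
  next
    case 2
    then show ?thesis using assms(1) by (simp only: add.commute[of f] lead_coeff_add_le)
  next
    case 3
    then show ?thesis using assms degree_add_pos_lead_coeff[OF assms] by simp
  qed
qed

lemma degree_add_pos_lead_coeff3:
  fixes f g h :: "'a::linordered_idom poly"
  assumes "lead_coeff f > 0" "lead_coeff g > 0" "lead_coeff h > 0"
  shows "degree (f + g + h) = max (max (degree f) (degree g)) (degree h)"
  using assms lead_coeff_add_pos[OF assms(1,2)] by (simp add: degree_add_pos_lead_coeff)

lemma unit_fraction_identity_linear_factor:
  fixes x y z N :: "'a::linordered_idom poly"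
  assumes "unit_fraction_identity M N x y z" "M \<noteq> 0" "degree N = 1"
    and "lead_coeff x > 0" "lead_coeff y > 0" "lead_coeff z > 0"
  shows "degree x = 1 \<or> degree y = 1 \<or> degree z = 1"
proof -
  have nz: "x \<noteq> 0" "y \<noteq> 0" "z \<noteq> 0" "N \<noteq> 0" using assms(3-6) by auto
  have pos: "lead_coeff (x * y) > 0" "lead_coeff (y * z) > 0" "lead_coeff (z * x) > 0"
    using assms(4-6) by (simp_all add: lead_coeff_mult)
  have "x * y + y * z + z * x \<noteq> 0"
    using lead_coeff_add_pos[OF lead_coeff_add_pos[OF pos(1,2)] pos(3)]
    by (metis leading_coeff_0_iff order_less_irrefl)
  then have "degree (N * (x * y + y * z + z * x))
      = 1 + max (max (degree x + degree y) (degree y + degree z)) (degree z + degree x)"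
    using nz assms(3) degree_add_pos_lead_coeff3[OF pos] by (simp add: degree_mult_eq)
  moreover have "degree (smult M (x * y * z)) = degree x + degree y + degree z"
    using nz assms(2) by (simp add: degree_mult_eq)
  ultimately show ?thesis using assms(1) unfolding unit_fraction_identity_def by auto
qed

lemma unit_fraction_identity_second_linear_factor:
  fixes x y z N :: "'a::linordered_idom poly"
  assumes "unit_fraction_identity M N x y z" "degree N = 1" "degree x = 1"
    and "M * lead_coeff x \<noteq> lead_coeff N" "lead_coeff y > 0" "lead_coeff z > 0"
  shows "degree y = 1 \<or> degree z = 1"
proof -
  define T where "T = smult M x - N"
  have "coeff T 1 \<noteq> 0" using assms(2-4) by (simp add: T_def)
  moreover have "degree T \<le> 1" unfolding T_def using assms(2,3) by (intro degree_diff_le) auto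
  ultimately have T: "degree T = 1" "T \<noteq> 0" by (auto intro: antisym le_degree)
  have nz: "N \<noteq> 0" "x \<noteq> 0" "y \<noteq> 0" "z \<noteq> 0" using assms(2,3,5,6) by auto
  have "y + z \<noteq> 0"
    using lead_coeff_add_pos[OF assms(5,6)] by (metis leading_coeff_0_iff order_less_irrefl)
  have "T * y * z = N * x * (y + z)"
    using assms(1) unfolding T_def unit_fraction_identity_def by (simp add: algebra_simps)
  then have "degree T + degree y + degree z = degree N + degree x + degree (y + z)"
    using T nz \<open>y + z \<noteq> 0\<close> by (metis degree_mult_eq mult_eq_0_iff)
  then show ?thesis
    using T assms(2,3) degree_add_pos_lead_coeff[OF assms(5,6)] by auto
qed

lemma int_unit_fractions_two_zero:
  fixes X Y Z M :: int
  assumes "M * X * Y * Z = X * Y + Y * Z + Z * X" "M \<ge> 4"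
  shows "(X = 0 \<and> Y = 0) \<or> (Y = 0 \<and> Z = 0) \<or> (Z = 0 \<and> X = 0)"
proof (rule ccontr)
  assume "\<not> ?thesis"
  then have "X \<noteq> 0" "Y \<noteq> 0" "Z \<noteq> 0" using assms(1) by auto
  then have "\<bar>X * Y\<bar> \<le> \<bar>X * Y * Z\<bar>" "\<bar>Y * Z\<bar> \<le> \<bar>X * Y * Z\<bar>"
    "\<bar>Z * X\<bar> \<le> \<bar>X * Y * Z\<bar>" "\<bar>X * Y * Z\<bar> > 0"
    by (simp_all add: abs_mult)
  moreover have "4 * \<bar>X * Y * Z\<bar> \<le> \<bar>M * X * Y * Z\<bar>"
    using mult_right_mono[OF assms(2), of "\<bar>X * Y * Z\<bar>"] assms(2)
    by (simp add: abs_mult mult.assoc)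
  ultimately show False using assms(1) by linarith
qed

lemma linear_poly_vanishing_at_0:
  fixes L :: "'a::comm_ring_1 poly"
  assumes "degree L = 1" "poly L 0 = 0"
  shows "L = smult (lead_coeff L) [:0, 1:]"
proof -
  obtain a b where "L = [:b, a:]" using degree1_coeffs[OF assms(1)] by metis
  then show ?thesis using assms by simp
qed

(* What remains of the identity for L1 = a1 U, L2 = c2 + a2 U and z = U w after cancelling U. *)
lemma no_cancelled_unit_fraction_identity:
  fixes w :: "int poly" and a1 a2 c2 p M :: int
  assumes pos: "a1 > 0" "a2 > 0" "p > 0" "M > 0" and w: "lead_coeff w > 0"
    and eq: "w * [:- c2, M*a1*c2 - p*c2 - a2 - a1, M*a1*a2 - p*a2 - p*a1:]
      = smult a1 ([:1, p:] * [:c2, a2:])"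
  shows False
proof -
  define d1 where "d1 = M*a1*c2 - p*c2 - a2 - a1"
  define d2 where "d2 = M*a1*a2 - p*a2 - p*a1"
  define D where "D = [:- c2, d1, d2:]"
  have coeff_D: "coeff D 0 = - c2" "coeff D 1 = d1" "coeff D 2 = d2"
    by (simp_all add: D_def numeral_2_eq_2)
  obtain w0 w1 w' where w_eq: "w = pCons w0 (pCons w1 w')" by (metis pCons_cases)
  have eq0: "c2 * (w0 + a1) = 0"
    using arg_cong[OF eq, of "\<lambda>f. coeff f 0"] by (simp add: w_eq algebra_simps)
  have eq1: "w0 * d1 - w1 * c2 = a1 * (p * c2 + a2)"
    using arg_cong[OF eq, of "\<lambda>f. coeff f 1"] by (simp add: w_eq d1_def algebra_simps)
  have w0: "w0 < 0"
  proof (cases "c2 = 0")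
    case True
    then have "w0 * (a1 + a2) = - (a1 * a2)" using eq1 by (simp add: d1_def algebra_simps)
    then have "w0 * (a1 + a2) < 0" using pos by simp
    then show ?thesis using pos by (simp add: mult_less_0_iff)
  next
    case False
    then show ?thesis using eq0 pos by simp
  qed
  have "w * D = smult a1 ([:1, p:] * [:c2, a2:])" using eq by (simp only: D_def d1_def d2_def)
  then have "w * D \<noteq> 0" "degree (w * D) = 2" "lead_coeff (w * D) = a1 * p * a2"
    using pos by simp_all
  then have deg: "degree w + degree D = 2" by (metis degree_mult_eq mult_eq_0_iff)
  have "lead_coeff w * lead_coeff D = a1 * p * a2"
    unfolding lead_coeff_mult[symmetric] by fact
  then have "lead_coeff w * lead_coeff D > 0" using pos by simp
  then have D: "lead_coeff D > 0" using w by (simp add: zero_less_mult_iff)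
  have "degree w \<noteq> 0" using w w0 by (auto simp: w_eq)
  then consider "degree D = 0" | "degree D = 1" using deg by linarith
  then show False
  proof cases
    case 1
    then have "coeff D 1 = 0" "coeff D 2 = 0" by (simp_all add: coeff_eq_0)
    then have "d1 = 0" "d2 = 0" by (simp_all only: coeff_D)
    have "c2 < 0" using D 1 coeff_D(1) by simp
    have "a2 * (M*a1 - p) = p * a1" "c2 * (M*a1 - p) = a1 + a2"
      using \<open>d1 = 0\<close> \<open>d2 = 0\<close> by (simp_all add: d1_def d2_def algebra_simps)
    then have "a2 * (M*a1 - p) > 0" "c2 * (M*a1 - p) > 0" using pos by simp_all
    then have "M*a1 - p > 0" using pos by (simp add: zero_less_mult_iff)
    with \<open>c2 * (M*a1 - p) > 0\<close> \<open>c2 < 0\<close> show False by (simp add: zero_less_mult_iff)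
  next
    case 2
    then have "d1 > 0" using D coeff_D(2) by simp
    have "lead_coeff w = w1" using 2 deg by (simp add: w_eq)
    then have "w1 > 0" using w by simp
    show False
    proof (cases "c2 = 0")
      case True
      then show False using \<open>d1 > 0\<close> pos by (simp add: d1_def)
    next
      case False
      define K where "K = M * a1 * a1 + w1"
      have "a1 * a1 \<le> M * a1 * a1" using pos by simp
      then have K: "K > a1 * a1" using \<open>w1 > 0\<close> by (simp add: K_def)
      have "w0 = - a1" using False eq0 by simp
      then have "c2 * K = a1 * a1" using eq1 unfolding K_def d1_def by algebra
      moreover have "a1 * a1 > 0" using pos by simp
      ultimately have "c2 * K > 0" "K > 0" using K by linarith+
      then have "c2 \<ge> 1" by (simp add: zero_less_mult_iff)
      then have "c2 * K \<ge> K" using \<open>K > 0\<close> by simp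
      then show False using K \<open>c2 * K = a1 * a1\<close> by simp
    qed
  qed
qed

lemma no_unit_fraction_identity_vanishing_at_0:
  fixes L1 L2 z :: "int poly" and M p :: int
  assumes eq: "unit_fraction_identity M [:1, p:] L1 L2 z" and "M > 0" "p > 0"
    and "degree L1 = 1" "degree L2 = 1" "lead_coeff L1 > 0" "lead_coeff L2 > 0" "lead_coeff z > 0"
    and "poly L1 0 = 0" "poly z 0 = 0"
  shows False
proof -
  define X :: "int poly" where "X = [:0, 1:]"
  define N :: "int poly" where "N = [:1, p:]"
  define a1 where "a1 = lead_coeff L1"
  have L1: "L1 = smult a1 X"
    unfolding a1_def X_def by (rule linear_poly_vanishing_at_0[OF assms(4,9)])
  obtain a2 c2 where L2: "L2 = [:c2, a2:]" using degree1_coeffs[OF assms(5)] by metis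
  have a: "a1 > 0" "a2 > 0" using assms(5-7) by (simp_all add: a1_def L2)
  obtain w where z: "z = X * w"
    using assms(10) poly_eq_0_iff_dvd[of z 0] by (auto simp: X_def elim: dvdE)
  have "lead_coeff w > 0" using assms(8) unfolding z lead_coeff_mult by (simp add: X_def)
  define D where "D = smult (M * a1) (X * L2) - N * L2 - smult a1 (N * X)"
  have "X * (w * D - smult a1 (N * L2)) = 0"
    using eq unfolding unit_fraction_identity_def L1 z N_def[symmetric] D_def
    by (simp add: algebra_simps)
  then have "w * D = smult a1 ([:1, p:] * [:c2, a2:])"
    by (simp add: X_def N_def L2)
  moreover have "D = [:- c2, M*a1*c2 - p*c2 - a2 - a1, M*a1*a2 - p*a2 - p*a1:]"
    by (simp add: D_def X_def N_def L2 algebra_simps)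
  ultimately show False
    using no_cancelled_unit_fraction_identity[OF a assms(3,2) \<open>lead_coeff w > 0\<close>] by simp
qed

lemma no_unit_fraction_identity_linear_linear:
  fixes L1 L2 z :: "int poly" and M p :: int
  assumes eq: "unit_fraction_identity M [:1, p:] L1 L2 z" and "M \<ge> 4" "p > 0"
    and "degree L1 = 1" "degree L2 = 1" "lead_coeff L1 > 0" "lead_coeff L2 > 0" "lead_coeff z > 0"
  shows False
proof -
  have "M * poly L1 0 * poly L2 0 * poly z 0
      = poly L1 0 * poly L2 0 + poly L2 0 * poly z 0 + poly z 0 * poly L1 0"
    using arg_cong[OF eq[unfolded unit_fraction_identity_def], of "\<lambda>f. poly f 0"] by simp
  then have vanish: "(poly L1 0 = 0 \<and> poly L2 0 = 0) \<or> (poly L2 0 = 0 \<and> poly z 0 = 0)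
      \<or> (poly z 0 = 0 \<and> poly L1 0 = 0)"
    using assms(2) by (rule int_unit_fractions_two_zero)
  have z0: "poly z 0 = 0" if "poly L1 0 = 0" "poly L2 0 = 0"
  proof -
    define X :: "int poly" where "X = [:0, 1:]"
    define N :: "int poly" where "N = [:1, p:]"
    define a1 a2 where "a1 = lead_coeff L1" and "a2 = lead_coeff L2"
    have "L1 = smult a1 X" "L2 = smult a2 X" unfolding a1_def a2_def X_def
      by (intro linear_poly_vanishing_at_0 assms(4,5) that)+
    then have "X * (X * smult (M * a1 * a2) z - N * (smult (a1 * a2) X + smult (a1 + a2) z)) = 0"
      using eq unfolding unit_fraction_identity_def N_def[symmetric]
      by (simp add: algebra_simps smult_add_left)
    then have "(a1 + a2) * poly z 0 = 0"
      by (auto simp: X_def N_def dest: arg_cong[of _ _ "\<lambda>f. poly f 0"])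
    moreover have "a1 + a2 > 0" using assms(6,7) by (simp add: a1_def a2_def)
    ultimately show ?thesis by simp
  qed
  have "M > 0" using assms(2) by simp
  consider "poly L1 0 = 0" "poly z 0 = 0" | "poly L2 0 = 0" "poly z 0 = 0"
    using vanish z0 by blast
  then show False
  proof cases
    case 1
    show False
      by (rule no_unit_fraction_identity_vanishing_at_0[OF eq \<open>M > 0\<close> assms(3-8) 1])
  next
    case 2
    from eq have "unit_fraction_identity M [:1, p:] L2 L1 z"
      by (simp only: unit_fraction_identity_swap12)
    then show False
      by (rule no_unit_fraction_identity_vanishing_at_0[OF _ \<open>M > 0\<close> assms(3,5,4,7,6,8) 2])
  qed
qed

lemma no_unit_fraction_identity_at_1:
  fixes x y z :: "int poly" and M p :: int
  assumes "M \<ge> 4" "p > 0" "\<not> M dvd p"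
    and "lead_coeff x > 0" "lead_coeff y > 0" "lead_coeff z > 0"
  shows "\<not> unit_fraction_identity M [:1, p:] x y z"
proof
  have no_linear: False
    if "unit_fraction_identity M [:1, p:] x' y' z'" "degree x' = 1"
      "lead_coeff x' > 0" "lead_coeff y' > 0" "lead_coeff z' > 0" for x' y' z'
  proof -
    have "M * lead_coeff x' \<noteq> lead_coeff [:1, p:]" using assms(2,3) by auto
    then have "degree y' = 1 \<or> degree z' = 1"
      using unit_fraction_identity_second_linear_factor[OF that(1)] assms(2) that by simp
    then show False
      using no_unit_fraction_identity_linear_linear[OF _ assms(1,2)] that
        unit_fraction_identity_swap23[of M _ x' y' z'] by blast
  qed
  assume eq: "unit_fraction_identity M [:1, p:] x y z"
  then have "degree x = 1 \<or> degree y = 1 \<or> degree z = 1"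
    using unit_fraction_identity_linear_factor assms by fastforce
  then show False
    using no_linear[of x y z] no_linear[of y x z] no_linear[of z x y] eq assms(4-6)
      unit_fraction_identity_swap12 unit_fraction_identity_swap23 by metis
qed

lemma no_unit_fraction_identity:
  fixes x y z :: "int poly" and M p n0 :: int
  assumes "M \<ge> 4" "p > 0" "\<not> M dvd p" "p dvd n0 - 1"
    and "lead_coeff x > 0" "lead_coeff y > 0" "lead_coeff z > 0"
  shows "\<not> unit_fraction_identity M [:n0, p:] x y z"
proof
  obtain q where q: "n0 = p * q + 1" using assms(4) by (metis dvdE eq_diff_eq)
  define shift :: "int poly \<Rightarrow> int poly" where "shift f = f \<circ>\<^sub>p [:- q, 1:]" for f
  assume "unit_fraction_identity M [:n0, p:] x y z"
  then have "unit_fraction_identity M (shift [:n0, p:]) (shift x) (shift y) (shift z)"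
    unfolding shift_def by (rule unit_fraction_identity_pcompose)
  moreover have "shift [:n0, p:] = [:1, p:]" by (simp add: shift_def pcompose_pCons q)
  moreover have "lead_coeff (shift f) = lead_coeff f" for f by (simp add: shift_def lead_coeff_comp)
  ultimately show False using no_unit_fraction_identity_at_1[OF assms(1-3)] assms(5-7) by simp
qed

lemma lead_coeff_pos_if_pos_int_coeff_poly: "pos_int_coeff_poly f \<Longrightarrow> lead_coeff f > 0"
  unfolding pos_int_coeff_poly_def by (metis leading_coeff_0_iff order_le_less)

lemma evalR_of_int: "evalR f (of_int k) = of_int (poly f k)"
  unfolding evalR_def by (induct f rule: pCons_induct) (simp_all add: map_poly_pCons)

lemma unit_fraction_identity_if_evalR:
  fixes M :: int and N x y z :: "int poly"
  assumes "N \<noteq> 0" "x \<noteq> 0" "y \<noteq> 0" "z \<noteq> 0"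
    and "\<And>t. evalR N t \<noteq> 0 \<Longrightarrow> evalR x t \<noteq> 0 \<Longrightarrow> evalR y t \<noteq> 0 \<Longrightarrow> evalR z t \<noteq> 0 \<Longrightarrow>
      of_int M / evalR N t = 1 / evalR x t + 1 / evalR y t + 1 / evalR z t"
  shows "unit_fraction_identity M N x y z"
proof -
  define Q where "Q = smult M (x * y * z) - N * (x * y + y * z + z * x)"
  have "poly (Q * N * x * y * z) k = 0" for k
  proof (cases "poly N k = 0 \<or> poly x k = 0 \<or> poly y k = 0 \<or> poly z k = 0")
    case False
    then have "of_int M / of_int (poly N k) =
        1 / of_int (poly x k) + 1 / of_int (poly y k) + (1 / of_int (poly z k) :: real)"
      using assms(5)[of "of_int k"] by (simp add: evalR_of_int)
    then have "(of_int (poly Q k) :: real) = 0"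
      using False by (simp add: Q_def field_simps)
    then show ?thesis by simp
  qed auto
  then have "Q * N * x * y * z = 0" using poly_all_0_iff_0 by blast
  then have "Q = 0" using assms(1-4) by simp
  then show ?thesis by (simp add: Q_def unit_fraction_identity_def)
qed

theorem corollary4:
  fixes m p n0 :: nat
  assumes "m \<ge> 4" and "prime p" and "gcd p m = 1"
    and "n0 > 0" and "n0 mod p = 1 mod p"
  shows "\<not> (\<exists>x y z. pos_int_coeff_poly x \<and> pos_int_coeff_poly y \<and> pos_int_coeff_poly z \<and>
            (\<forall>t::real. real n0 + real p * t \<noteq> 0 \<and> evalR x t \<noteq> 0 \<and> evalR y t \<noteq> 0 \<and> evalR z t \<noteq> 0 \<longrightarrow>
               real m / (real n0 + real p * t) = 1 / evalR x t + 1 / evalR y t + 1 / evalR z t))"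
proof (intro notI, elim exE conjE)
  fix x y z
  assume pos: "pos_int_coeff_poly x" "pos_int_coeff_poly y" "pos_int_coeff_poly z"
    and H: "\<forall>t::real. real n0 + real p * t \<noteq> 0 \<and> evalR x t \<noteq> 0 \<and> evalR y t \<noteq> 0 \<and> evalR z t \<noteq> 0 \<longrightarrow>
               real m / (real n0 + real p * t) = 1 / evalR x t + 1 / evalR y t + 1 / evalR z t"
  have p: "p > 0" using assms(2) by (simp add: prime_gt_0_nat)
  have "evalR [:int n0, int p:] t = real n0 + real p * t" for t
    by (simp add: evalR_def map_poly_pCons mult.commute)
  then have "unit_fraction_identity (int m) [:int n0, int p:] x y z"
    using H pos p by (intro unit_fraction_identity_if_evalR) (auto simp: pos_int_coeff_poly_def)
  moreover have "\<not> int m dvd int p" using assms(1,3) gcd_nat.absorb2[of m p] by auto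
  moreover have "int p dvd int n0 - 1" using assms(5) by (metis mod_eq_dvd_iff of_nat_1 of_nat_mod)
  ultimately show False
    using no_unit_fraction_identity assms(1) p pos lead_coeff_pos_if_pos_int_coeff_poly by fastforce
qed

end
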